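(* Let $G$ be a finite simple graph with a perfect matching $M$, and let $\mathcal{C}$ be an optimal edge $2$-colouring of $G$. For an edge $e$ write $\mathrm{cl}(e)$ for its colour, and for a vertex $u$ write $\mathrm{mcl}(u)$ for the colour of the unique edge of $M$ incident with $u$. Let $u_0u_1\cdots u_k$ ($k\ge 1$) be a path in $G\setminus M$ such that $\mathrm{mcl}(u_0)=\mathrm{cl}(u_0u_1)$ and $\mathrm{mcl}(u_k)=\mathrm{cl}(u_{k-1}u_k)$. Then there exist indices $0\le i<j\le k$ such that $\mathrm{mcl}(u_i)=\mathrm{mcl}(u_j)$.
   Context: $G\setminus M$ is the spanning subgraph of $G$ with edge set $E(G)\setminus M$. An edge $2$-colouring is an assignment of colours to edges (not necessarily proper) such that at each vertex the incident edges carry at most $2$ distinct colours; it is optimal if it uses the maximum possible number of colours. *)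

theory Defs
  imports Main
begin

definition simple_graph :: "'a set \<Rightarrow> 'a set set \<Rightarrow> bool" where
  "simple_graph V E \<longleftrightarrow> finite V \<and> (\<forall>e\<in>E. e \<subseteq> V \<and> card e = 2)"

definition perfect_matching :: "'a set \<Rightarrow> 'a set set \<Rightarrow> 'a set set \<Rightarrow> bool" where
  "perfect_matching V E M \<longleftrightarrow> M \<subseteq> E \<and> (\<forall>v\<in>V. \<exists>!e. e \<in> M \<and> v \<in> e)"

definition edge_2_colouring :: "'a set \<Rightarrow> 'a set set \<Rightarrow> ('a set \<Rightarrow> nat) \<Rightarrow> bool" where
  "edge_2_colouring V E c \<longleftrightarrow> (\<forall>v\<in>V. card (c ` {e\<in>E. v \<in> e}) \<le> 2)"

definition num_colours :: "'a set set \<Rightarrow> ('a set \<Rightarrow> nat) \<Rightarrow> nat" where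
  "num_colours E c = card (c ` E)"

definition optimal_edge_2_colouring :: "'a set \<Rightarrow> 'a set set \<Rightarrow> ('a set \<Rightarrow> nat) \<Rightarrow> bool" where
  "optimal_edge_2_colouring V E c \<longleftrightarrow> edge_2_colouring V E c \<and>
     (\<forall>c'. edge_2_colouring V E c' \<longrightarrow> num_colours E c' \<le> num_colours E c)"

definition mcl :: "'a set set \<Rightarrow> ('a set \<Rightarrow> nat) \<Rightarrow> 'a \<Rightarrow> nat" where
  "mcl M c u = c (THE e. e \<in> M \<and> u \<in> e)"

definition is_path :: "'a set set \<Rightarrow> 'a list \<Rightarrow> bool" where
  "is_path E' us \<longleftrightarrow> us \<noteq> [] \<and> distinct us \<and>
     (\<forall>i. Suc i < length us \<longrightarrow> {us ! i, us ! Suc i} \<in> E')"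

end

theory Submission
  imports Defs
begin

text \<open>Suppose the values \<open>mcl(u\<^sub>0), \<dots>, mcl(u\<^sub>k)\<close> were pairwise distinct. Then every path edge
  \<open>u\<^sub>iu\<^sub>i\<^sub>+\<^sub>1\<close> carries a colour \<open>mcl(u\<^sub>j)\<close> with \<open>j \<le> i\<close>: at \<open>u\<^sub>i\<^sub>+\<^sub>1\<close> the incoming path edge has colour
  \<open>mcl(u\<^sub>j) \<noteq> mcl(u\<^sub>i\<^sub>+\<^sub>1)\<close>, so these are the only two colours allowed at \<open>u\<^sub>i\<^sub>+\<^sub>1\<close>, and the outgoing
  path edge has one of them. For \<open>i = k - 1\<close> this contradicts \<open>mcl(u\<^sub>k) = cl(u\<^sub>k\<^sub>-\<^sub>1u\<^sub>k)\<close>.\<close>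

lemma simple_graph_finite_edges:
  assumes "simple_graph V E"
  shows "finite E"
proof -
  have "E \<subseteq> Pow V" and "finite V"
    using assms unfolding simple_graph_def by auto
  then show ?thesis
    by (meson finite_Pow_iff finite_subset)
qed

lemma simple_graph_edge_vertices:
  assumes "simple_graph V E" "{u, v} \<in> E"
  shows "u \<in> V" "v \<in> V"
  using assms unfolding simple_graph_def by auto

lemma edge_2_colouring_third_edge:
  assumes "edge_2_colouring V E c" "finite E" "v \<in> V"
    and "e\<^sub>1 \<in> E" "e\<^sub>2 \<in> E" "e\<^sub>3 \<in> E" "v \<in> e\<^sub>1" "v \<in> e\<^sub>2" "v \<in> e\<^sub>3"
    and "c e\<^sub>1 \<noteq> c e\<^sub>2"
  shows "c e\<^sub>3 = c e\<^sub>1 \<or> c e\<^sub>3 = c e\<^sub>2"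
proof (rule ccontr)
  assume "\<not> ?thesis"
  with \<open>c e\<^sub>1 \<noteq> c e\<^sub>2\<close> have "3 = card {c e\<^sub>1, c e\<^sub>2, c e\<^sub>3}"
    by auto
  also have "\<dots> \<le> card (c ` {e\<in>E. v \<in> e})"
    using assms by (intro card_mono) auto
  also have "\<dots> \<le> 2"
    using assms(1,3) unfolding edge_2_colouring_def by auto
  finally show False
    by simp
qed

lemma perfect_matching_mcl_edge:
  assumes "perfect_matching V E M" "v \<in> V"
  obtains e where "e \<in> E" "v \<in> e" "mcl M c v = c e"
proof -
  have "\<exists>!e. e \<in> M \<and> v \<in> e"
    using assms unfolding perfect_matching_def by auto
  from theI'[OF this] assms(1) show thesis
    by (intro that[of "THE e. e \<in> M \<and> v \<in> e"]) (auto simp: mcl_def perfect_matching_def)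
qed

lemma walk_edge_colour_is_earlier_mcl:
  assumes graph: "simple_graph V E" and matching: "perfect_matching V E M"
    and colouring: "edge_2_colouring V E c"
    and walk: "\<And>i. i < k \<Longrightarrow> {us ! i, us ! Suc i} \<in> E"
    and start: "mcl M c (us ! 0) = c {us ! 0, us ! 1}"
    and distinct_mcl: "\<And>a b. a < b \<Longrightarrow> b \<le> k \<Longrightarrow> mcl M c (us ! a) \<noteq> mcl M c (us ! b)"
    and "i < k"
  shows "\<exists>j\<le>i. c {us ! i, us ! Suc i} = mcl M c (us ! j)"
  using \<open>i < k\<close>
proof (induction i)
  case 0
  then show ?case
    using start by auto
next
  case (Suc i)
  then obtain j where "j \<le> i" and incoming: "c {us ! i, us ! Suc i} = mcl M c (us ! j)"
    by auto
  let ?v = "us ! Suc i"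
  have edge_in: "{us ! i, ?v} \<in> E" and edge_out: "{?v, us ! Suc (Suc i)} \<in> E"
    using walk Suc.prems by auto
  then have "?v \<in> V"
    using simple_graph_edge_vertices[OF graph] by blast
  then obtain m where "m \<in> E" "?v \<in> m" and matched: "mcl M c ?v = c m"
    using perfect_matching_mcl_edge[OF matching] by metis
  have "c {us ! i, ?v} \<noteq> c m"
    using incoming matched distinct_mcl[of j "Suc i"] \<open>j \<le> i\<close> Suc.prems by simp
  then have "c {?v, us ! Suc (Suc i)} = c {us ! i, ?v} \<or> c {?v, us ! Suc (Suc i)} = c m"
    using edge_2_colouring_third_edge[OF colouring simple_graph_finite_edges[OF graph] \<open>?v \<in> V\<close>
        edge_in \<open>m \<in> E\<close> edge_out] \<open>?v \<in> m\<close> by auto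
  then show ?case
    using incoming matched \<open>j \<le> i\<close> by (metis le_Suc_eq order_refl)
qed

theorem lemma1:
  fixes V :: "'a set" and E M :: "'a set set" and c :: "'a set \<Rightarrow> nat"
    and us :: "'a list" and k :: nat
  assumes "simple_graph V E"
    and "perfect_matching V E M"
    and "optimal_edge_2_colouring V E c"
    and "is_path (E - M) us"
    and "length us = k + 1" and "k \<ge> 1"
    and "mcl M c (us ! 0) = c {us ! 0, us ! 1}"
    and "mcl M c (us ! k) = c {us ! (k - 1), us ! k}"
  shows "\<exists>i j. i < j \<and> j \<le> k \<and> mcl M c (us ! i) = mcl M c (us ! j)"
proof (rule ccontr)
  assume "\<not> ?thesis"
  then have distinct_mcl: "\<And>a b. a < b \<Longrightarrow> b \<le> k \<Longrightarrow> mcl M c (us ! a) \<noteq> mcl M c (us ! b)"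
    by blast
  have colouring: "edge_2_colouring V E c"
    using assms(3) unfolding optimal_edge_2_colouring_def by simp
  have walk: "\<And>i. i < k \<Longrightarrow> {us ! i, us ! Suc i} \<in> E"
    using assms(4,5) unfolding is_path_def by auto
  obtain j where "j \<le> k - 1" "c {us ! (k - 1), us ! Suc (k - 1)} = mcl M c (us ! j)"
    using walk_edge_colour_is_earlier_mcl[where k = k and i = "k - 1",
        OF assms(1,2) colouring walk assms(7) distinct_mcl] \<open>k \<ge> 1\<close> by auto
  moreover have "j < k"
    using \<open>j \<le> k - 1\<close> \<open>k \<ge> 1\<close> by simp
  ultimately show False
    using assms(8) distinct_mcl[of j k] \<open>k \<ge> 1\<close> by simp
qed

end
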